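(* Let $\Phi:\mathbb R^+\to\mathbb R$ be non-decreasing and concave with $\Phi(x)/x\to0$ as $x\to\infty$ and $\int_{\mathbb R}e^{-\Phi(|x|)}dx<\infty$. Assume that in a neighbourhood of $+\infty$, $\Phi$ is $\mathcal C^2$ and there exists $\theta>1$ such that $\Phi^\theta$ is convex. Let $d\mu_\Phi(x)=Z_\Phi^{-1}e^{-\Phi(|x|)}dx$ on $\mathbb R$. Then, with $\Phi'$ the right derivative, $$\lim_{t\to0}\frac{J_{\mu_\Phi}(t)}{t\,\Phi'\circ\Phi^{-1}(\log\frac1t)}=1.$$ Consequently, if $\Phi(0)<\log2$, then $L_\Phi(t)=\min(t,1-t)\,\Phi'\circ\Phi^{-1}\big(\log\frac{1}{\min(t,1-t)}\big)$ is defined on $[0,1]$ and there exist $k_1,k_2>0$ such that $k_1L_\Phi(t)\le J_{\mu_\Phi}(t)\le k_2L_\Phi(t)$ for all $t\in[0,1]$.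
   Context: $F_\mu(x)=\mu((-\infty,x])$ and $J_\mu=F_\mu'\circ F_\mu^{-1}$ on $(0,1)$ (extended by $0$ at $0$ and $1$); $Z_\Phi$ is the normalizing constant. *)

theory Defs
  imports "HOL-Probability.Probability"
begin

definition Z_Phi :: "(real \<Rightarrow> real) \<Rightarrow> real" where
  "Z_Phi \<Phi> = (LINT x|lborel. exp (- \<Phi> \<bar>x\<bar>))"

definition mu_Phi :: "(real \<Rightarrow> real) \<Rightarrow> real measure" where
  "mu_Phi \<Phi> = density lborel (\<lambda>x. ennreal (exp (- \<Phi> \<bar>x\<bar>) / Z_Phi \<Phi>))"

definition J_of :: "real measure \<Rightarrow> real \<Rightarrow> real" where
  "J_of \<mu> t = (if 0 < t \<and> t < 1
      then deriv (cdf \<mu>) (inv_into UNIV (cdf \<mu>) t) else 0)"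

definition rderiv :: "(real \<Rightarrow> real) \<Rightarrow> real \<Rightarrow> real" where
  "rderiv f x = (THE D. (f has_real_derivative D) (at_right x))"

definition Phi_inv :: "(real \<Rightarrow> real) \<Rightarrow> real \<Rightarrow> real" where
  "Phi_inv \<Phi> y = inv_into {0..} \<Phi> y"

definition C2_on :: "real set \<Rightarrow> (real \<Rightarrow> real) \<Rightarrow> bool" where
  "C2_on S f \<longleftrightarrow> (\<exists>f1 f2. (\<forall>x\<in>S. (f has_real_derivative f1 x) (at x)
      \<and> (f1 has_real_derivative f2 x) (at x)) \<and> continuous_on S f2)"

definition L_Phi :: "(real \<Rightarrow> real) \<Rightarrow> real \<Rightarrow> real" where
  "L_Phi \<Phi> t = min t (1 - t) * rderiv \<Phi> (Phi_inv \<Phi> (ln (1 / min t (1 - t))))"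

end

theory Submission
  imports Defs
begin

(* Write t = F(-y) for the mass of [y, oo); by the symmetry of mu_Phi, J(t) = exp(-Phi y) / Z.
   Concavity puts Phi below its tangent at y, so t >= exp(-Phi y) / (Z Phi'(y)); convexity of
   Phi^theta makes Phi' Phi^(theta-1) nondecreasing, which gives the matching upper bound
   t <= exp(-Phi y) / ((1 - (theta-1)/Phi y) Z Phi'(y)).  Hence J(t) ~ t Phi'(y), and
   log(1/t) ~ Phi(y) since log Phi' = o(Phi).  For v = Phi^-1(log(1/t)), monotonicity of Phi' and
   of Phi' Phi^(theta-1) squeezes Phi'(y)/Phi'(v) between 1 and (Phi(v)/Phi(y))^(theta-1) -> 1.
   The two-sided bound by L_Phi combines this limit near 0 with crude bounds on [delta, 1/2] and
   the symmetry t <-> 1 - t. *)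

lemma rderiv_eqI:
  assumes "(f has_real_derivative D) (at_right x)"
  shows "rderiv f x = D"
  unfolding rderiv_def
proof (rule the_equality[where P = "\<lambda>D. (f has_real_derivative D) (at_right x)", OF assms])
  fix D' assume "(f has_real_derivative D') (at_right x)"
  then show "D' = D"
    using assms trivial_limit_at_right_real
    unfolding has_field_derivative_iff by (blast intro: tendsto_unique)
qed

lemma rderiv_eq_deriv:
  assumes "(f has_real_derivative D) (at x)"
  shows "rderiv f x = D"
  by (rule rderiv_eqI[OF has_field_derivative_at_within[OF assms]])

lemma slope_neg_swap: "(a::real) \<noteq> b \<Longrightarrow> ((- p) - (- q)) / (a - b) = - ((q - p) / (b - a))"
  by (simp add: field_simps)

locale mono_profile =
  fixes \<Phi> :: "real \<Rightarrow> real"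
  assumes mono: "mono_on {0..} \<Phi>"
begin

lemma Phi_mono: "0 \<le> x \<Longrightarrow> x \<le> y \<Longrightarrow> \<Phi> x \<le> \<Phi> y"
  using mono by (auto simp: mono_on_def)

lemma exp_neg_Phi_abs_le: "exp (- \<Phi> \<bar>x\<bar>) \<le> exp (- \<Phi> 0)"
  using Phi_mono[of 0 "\<bar>x\<bar>"] by simp

end

locale concave_mono_profile = mono_profile +
  assumes concave: "concave_on {0..} \<Phi>"
begin

lemma convex_neg_Phi: "convex_on {0..} (\<lambda>x. - \<Phi> x)"
  using concave by (simp add: concave_on_def)

lemma Phi_continuous_on: "continuous_on {0<..} \<Phi>"
proof -
  have "continuous_on {0<..} (\<lambda>x. - (- \<Phi> x))"
    by (intro continuous_on_minus convex_on_continuous convex_on_subset[OF convex_neg_Phi]) auto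
  then show ?thesis by simp
qed

lemma Phi_le_tangent:
  assumes "0 < c" "(\<Phi> has_real_derivative D) (at c)" "0 \<le> x"
  shows "\<Phi> x \<le> \<Phi> c + D * (x - c)"
proof -
  have "(- D) * (x - c) \<le> - \<Phi> x - (- \<Phi> c)"
    using convex_on_imp_above_tangent[OF convex_neg_Phi connected_Ici _ _
        has_field_derivative_at_within[OF DERIV_minus[OF assms(2)]]] assms by simp
  then show ?thesis by (simp add: algebra_simps)
qed

lemma slope_antimono:
  assumes "0 \<le> x" "x < w1" "w1 \<le> w2"
  shows "(\<Phi> w2 - \<Phi> x) / (w2 - x) \<le> (\<Phi> w1 - \<Phi> x) / (w1 - x)"
proof (cases "w1 = w2")
  case False
  then have "((- \<Phi> x) - (- \<Phi> w1)) / (x - w1) \<le> ((- \<Phi> x) - (- \<Phi> w2)) / (x - w2)"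
    using convex_on_slope_le(1)[OF convex_neg_Phi, of x w2 w1] assms by simp
  then show ?thesis using assms False by (simp only: slope_neg_swap)
qed simp

lemma slope_le_left_slope:
  assumes "0 \<le> u" "u < x" "x < w"
  shows "(\<Phi> w - \<Phi> x) / (w - x) \<le> (\<Phi> x - \<Phi> u) / (x - u)"
proof -
  have "((- \<Phi> u) - (- \<Phi> x)) / (u - x) \<le> ((- \<Phi> u) - (- \<Phi> w)) / (u - w)"
    using convex_on_slope_le(1)[OF convex_neg_Phi, of u w x] assms by simp
  also have "\<dots> \<le> ((- \<Phi> x) - (- \<Phi> w)) / (x - w)"
    using convex_on_slope_le(2)[OF convex_neg_Phi, of u w x] assms by simp
  finally show ?thesis using assms by (simp only: slope_neg_swap)
qed

text \<open>The difference quotients to the right of \<open>x\<close> increase as the step shrinks and are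
  bounded by a slope to the left of \<open>x\<close>, so they converge.\<close>
lemma has_right_derivative:
  assumes "0 < x"
  shows "(\<Phi> has_real_derivative rderiv \<Phi> x) (at_right x)"
proof -
  let ?q = "\<lambda>w. (\<Phi> w - \<Phi> x) / (w - x)"
  have "((\<lambda>w. - ?q w) \<longlongrightarrow> Inf ((\<lambda>w. - ?q w) ` ({x<..} \<inter> UNIV))) (at x within ({x<..} \<inter> UNIV))"
  proof (rule Lim_right_bound)
    show "- ?q a \<le> - ?q b" if "x < a" "a \<le> b" for a b
      using slope_antimono[of x a b] that assms by simp
    show "- ((\<Phi> x - \<Phi> 0) / (x - 0)) \<le> - ?q a" if "x < a" for a
      using slope_le_left_slope[of 0 x a] that assms by simp
  qed
  then have "(?q \<longlongrightarrow> - Inf ((\<lambda>w. - ?q w) ` ({x<..} \<inter> UNIV))) (at_right x)"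
    using tendsto_minus by fastforce
  then have "\<exists>D. (\<Phi> has_real_derivative D) (at_right x)"
    unfolding has_field_derivative_iff by blast
  then show ?thesis using rderiv_eqI by metis
qed

lemma rderiv_ge_slope:
  assumes "0 < x" "x < w"
  shows "(\<Phi> w - \<Phi> x) / (w - x) \<le> rderiv \<Phi> x"
proof (rule tendsto_lowerbound)
  show "((\<lambda>w. (\<Phi> w - \<Phi> x) / (w - x)) \<longlongrightarrow> rderiv \<Phi> x) (at_right x)"
    using has_right_derivative[OF assms(1)] unfolding has_field_derivative_iff .
  show "\<forall>\<^sub>F w' in at_right x. (\<Phi> w - \<Phi> x) / (w - x) \<le> (\<Phi> w' - \<Phi> x) / (w' - x)"
    unfolding eventually_at_right_field
    using assms by (intro exI[of _ w]) (auto intro!: slope_antimono)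
qed simp

lemma rderiv_le_slope:
  assumes "0 \<le> u" "u < x"
  shows "rderiv \<Phi> x \<le> (\<Phi> x - \<Phi> u) / (x - u)"
proof (rule tendsto_upperbound)
  show "((\<lambda>w. (\<Phi> w - \<Phi> x) / (w - x)) \<longlongrightarrow> rderiv \<Phi> x) (at_right x)"
    using has_right_derivative assms unfolding has_field_derivative_iff by simp
  show "\<forall>\<^sub>F w in at_right x. (\<Phi> w - \<Phi> x) / (w - x) \<le> (\<Phi> x - \<Phi> u) / (x - u)"
    unfolding eventually_at_right_field
    using assms by (intro exI[of _ "x + 1"]) (auto intro!: slope_le_left_slope)
qed simp

lemma rderiv_antimono:
  assumes "0 < x" "x < y"
  shows "rderiv \<Phi> y \<le> rderiv \<Phi> x"
  using rderiv_le_slope[of x y] rderiv_ge_slope[of x y] assms by linarith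

end

locale density_profile = mono_profile +
  assumes integrable: "integrable lborel (\<lambda>x. exp (- \<Phi> \<bar>x\<bar>))"
begin

lemma Phi_unbounded: "\<exists>x\<ge>0. M < \<Phi> x"
proof (rule ccontr)
  assume "\<not> ?thesis"
  then have "\<And>x. \<Phi> \<bar>x\<bar> \<le> M"
    by (meson abs_ge_zero not_less)
  then have "\<And>x. ennreal (exp (- M)) \<le> ennreal (norm (exp (- \<Phi> \<bar>x\<bar>)))"
    by (auto intro!: ennreal_leI)
  then have "(\<integral>\<^sup>+ (x::real). ennreal (exp (- M)) \<partial>lborel) \<le> (\<integral>\<^sup>+ x. ennreal (norm (exp (- \<Phi> \<bar>x\<bar>))) \<partial>lborel)"
    by (intro nn_integral_mono)
  moreover have "(\<integral>\<^sup>+ x. ennreal (norm (exp (- \<Phi> \<bar>x\<bar>))) \<partial>lborel) < \<infinity>"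
    using integrableD(2)[OF integrable] by (simp add: less_top)
  ultimately show False
    by (simp add: nn_integral_const ennreal_mult_top)
qed

lemma Phi_tendsto_at_top: "filterlim \<Phi> at_top at_top"
  unfolding filterlim_at_top
proof
  fix M
  obtain x0 where "x0 \<ge> 0" "M < \<Phi> x0" using Phi_unbounded by blast
  then show "eventually (\<lambda>x. M \<le> \<Phi> x) at_top"
    using Phi_mono[of x0] by (intro eventually_at_top_linorderI[of x0]) force
qed

lemma exp_neg_Phi_abs_measurable[measurable]: "(\<lambda>x. exp (- \<Phi> \<bar>x\<bar>)) \<in> borel_measurable borel"
  using borel_measurable_integrable[OF integrable] by simp

lemma Z_Phi_pos: "Z_Phi \<Phi> > 0"
proof -
  have "ennreal (exp (- \<Phi> 1)) = (\<integral>\<^sup>+ (x::real). ennreal (exp (- \<Phi> 1)) * indicator {0..1} x \<partial>lborel)"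
    by (simp add: nn_integral_cmult_indicator)
  also have "\<dots> \<le> (\<integral>\<^sup>+ x. ennreal (exp (- \<Phi> \<bar>x\<bar>)) \<partial>lborel)"
    using Phi_mono[of _ 1] by (auto split: split_indicator intro!: nn_integral_mono ennreal_leI)
  also have "\<dots> = ennreal (Z_Phi \<Phi>)"
    unfolding Z_Phi_def by (rule nn_integral_eq_integral) (use integrable in auto)
  finally show ?thesis
    by (metis ennreal_le_iff2 exp_gt_zero not_less order.strict_trans1)
qed

lemma sets_mu_Phi[simp, measurable_cong]: "sets (mu_Phi \<Phi>) = sets borel"
  by (simp add: mu_Phi_def)

lemma emeasure_mu_Phi:
  assumes [measurable]: "A \<in> sets borel"
  shows "emeasure (mu_Phi \<Phi>) A = (\<integral>\<^sup>+ x. ennreal (exp (- \<Phi> \<bar>x\<bar>) / Z_Phi \<Phi>) * indicator A x \<partial>lborel)"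
  unfolding mu_Phi_def by (rule emeasure_density) auto

sublocale mu: real_distribution "mu_Phi \<Phi>"
proof -
  have "emeasure (mu_Phi \<Phi>) UNIV = (\<integral>\<^sup>+ x. ennreal (1 / Z_Phi \<Phi>) * ennreal (exp (- \<Phi> \<bar>x\<bar>)) \<partial>lborel)"
    using Z_Phi_pos by (simp add: emeasure_mu_Phi ennreal_mult[symmetric])
  also have "\<dots> = ennreal (1 / Z_Phi \<Phi>) * ennreal (Z_Phi \<Phi>)"
    unfolding Z_Phi_def
    by (subst nn_integral_cmult, measurable, subst nn_integral_eq_integral) (use integrable in auto)
  also have "\<dots> = 1"
    using Z_Phi_pos by (simp add: ennreal_mult[symmetric])
  finally show "real_distribution (mu_Phi \<Phi>)"
    by (auto simp: real_distribution_def real_distribution_axioms_def mu_Phi_def intro: prob_spaceI)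
qed

abbreviation F :: "real \<Rightarrow> real" where "F \<equiv> cdf (mu_Phi \<Phi>)"

abbreviation quantile :: "real \<Rightarrow> real" where "quantile \<equiv> inv_into UNIV F"

lemma measure_Ioc_bounds:
  assumes "x < u" and bounds: "\<And>s. s \<in> {x<..u} \<Longrightarrow> lo \<le> exp (- \<Phi> \<bar>s\<bar>) \<and> exp (- \<Phi> \<bar>s\<bar>) \<le> hi"
    and "0 \<le> lo"
  shows "lo * (u - x) / Z_Phi \<Phi> \<le> measure (mu_Phi \<Phi>) {x<..u}"
    and "measure (mu_Phi \<Phi>) {x<..u} \<le> hi * (u - x) / Z_Phi \<Phi>"
proof -
  have Z: "Z_Phi \<Phi> > 0" by (rule Z_Phi_pos)
  have "0 \<le> hi" using bounds[of u] assms by force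
  have emeasure: "emeasure (mu_Phi \<Phi>) {x<..u} = ennreal (measure (mu_Phi \<Phi>) {x<..u})"
    by (simp add: mu.emeasure_eq_measure)
  have Ioc: "{x<..u} \<in> sets lborel" and Ioc_borel: "{x<..u} \<in> sets borel" by simp_all
  have "ennreal (lo / Z_Phi \<Phi>) * emeasure lborel {x<..u} \<le> emeasure (mu_Phi \<Phi>) {x<..u}"
    unfolding emeasure_mu_Phi[OF Ioc_borel] nn_integral_cmult_indicator[OF Ioc, symmetric]
    using bounds Z by (auto split: split_indicator intro!: nn_integral_mono ennreal_leI divide_right_mono)
  then show "lo * (u - x) / Z_Phi \<Phi> \<le> measure (mu_Phi \<Phi>) {x<..u}"
    using assms Z unfolding emeasure by (simp add: ennreal_mult[symmetric] ennreal_le_iff)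
  have "emeasure (mu_Phi \<Phi>) {x<..u} \<le> ennreal (hi / Z_Phi \<Phi>) * emeasure lborel {x<..u}"
    unfolding emeasure_mu_Phi[OF Ioc_borel] nn_integral_cmult_indicator[OF Ioc, symmetric]
    using bounds Z by (auto split: split_indicator intro!: nn_integral_mono ennreal_leI divide_right_mono)
  then have "ennreal (measure (mu_Phi \<Phi>) {x<..u}) \<le> ennreal (hi * (u - x) / Z_Phi \<Phi>)"
    using assms Z \<open>0 \<le> hi\<close> unfolding emeasure by (simp add: ennreal_mult[symmetric])
  then show "measure (mu_Phi \<Phi>) {x<..u} \<le> hi * (u - x) / Z_Phi \<Phi>"
    using assms Z \<open>0 \<le> hi\<close> by (subst (asm) ennreal_le_iff) auto
qed

lemma cdf_strict_mono:
  assumes "x < u"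
  shows "F x < F u"
proof -
  let ?M = "max \<bar>x\<bar> \<bar>u\<bar>"
  have "exp (- \<Phi> ?M) * (u - x) / Z_Phi \<Phi> \<le> measure (mu_Phi \<Phi>) {x<..u}"
    using Phi_mono[of _ ?M] exp_neg_Phi_abs_le
    by (intro measure_Ioc_bounds(1)[OF assms, where hi = "exp (- \<Phi> 0)"]) auto
  moreover have "0 < exp (- \<Phi> ?M) * (u - x) / Z_Phi \<Phi>"
    using assms Z_Phi_pos by simp
  ultimately show ?thesis
    using mu.cdf_diff_eq[OF assms] by linarith
qed

lemma isCont_cdf_mu_Phi: "isCont F x"
proof -
  have "emeasure (mu_Phi \<Phi>) {x} = 0"
    by (simp add: emeasure_mu_Phi)
  then show ?thesis
    by (simp add: mu.isCont_cdf mu.emeasure_eq_measure)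
qed

lemma measure_Ioc_difference_quotient:
  assumes "x < u" and close: "\<And>s. s \<in> {x<..u} \<Longrightarrow> \<bar>exp (- \<Phi> \<bar>s\<bar>) - e\<bar> \<le> r * Z_Phi \<Phi>"
  shows "\<bar>measure (mu_Phi \<Phi>) {x<..u} / (u - x) - e / Z_Phi \<Phi>\<bar> \<le> r"
proof -
  have Z: "Z_Phi \<Phi> > 0" by (rule Z_Phi_pos)
  have "max 0 (e - r * Z_Phi \<Phi>) * (u - x) / Z_Phi \<Phi> \<le> measure (mu_Phi \<Phi>) {x<..u}"
    by (rule measure_Ioc_bounds(1)[OF assms(1), where hi = "e + r * Z_Phi \<Phi>"]) (use close in force)+
  moreover have "measure (mu_Phi \<Phi>) {x<..u} \<le> (e + r * Z_Phi \<Phi>) * (u - x) / Z_Phi \<Phi>"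
    by (rule measure_Ioc_bounds(2)[OF assms(1), where lo = 0]) (use close in force)+
  moreover have "(e - r * Z_Phi \<Phi>) * (u - x) \<le> max 0 (e - r * Z_Phi \<Phi>) * (u - x)"
    using assms by (intro mult_right_mono) auto
  ultimately have "(e - r * Z_Phi \<Phi>) / Z_Phi \<Phi> \<le> measure (mu_Phi \<Phi>) {x<..u} / (u - x)"
    "measure (mu_Phi \<Phi>) {x<..u} / (u - x) \<le> (e + r * Z_Phi \<Phi>) / Z_Phi \<Phi>"
    using assms Z by (simp_all add: field_simps)
  then show ?thesis
    using Z by (simp add: diff_divide_distrib add_divide_distrib abs_le_iff)
qed

lemma cdf_has_real_derivative:
  assumes "isCont (\<lambda>s. exp (- \<Phi> \<bar>s\<bar>)) x"
  shows "(F has_real_derivative exp (- \<Phi> \<bar>x\<bar>) / Z_Phi \<Phi>) (at x)"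
  unfolding has_field_derivative_iff LIM_eq
proof (intro allI impI)
  fix r :: real
  assume "r > 0"
  then obtain d where "d > 0" and d: "\<And>s. dist s x < d \<Longrightarrow>
      \<bar>exp (- \<Phi> \<bar>s\<bar>) - exp (- \<Phi> \<bar>x\<bar>)\<bar> \<le> r / 2 * Z_Phi \<Phi>"
    using assms Z_Phi_pos unfolding continuous_at_eps_delta dist_real_def
    by (metis half_gt_zero less_eq_real_def mult_pos_pos)
  have "\<bar>(F y - F x) / (y - x) - exp (- \<Phi> \<bar>x\<bar>) / Z_Phi \<Phi>\<bar> \<le> r / 2"
    if "y \<noteq> x" "\<bar>y - x\<bar> < d" for y
  proof (cases "x < y")
    case True
    have "\<bar>measure (mu_Phi \<Phi>) {x<..y} / (y - x) - exp (- \<Phi> \<bar>x\<bar>) / Z_Phi \<Phi>\<bar> \<le> r / 2"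
      by (rule measure_Ioc_difference_quotient[OF True]) (use d that in \<open>auto simp: dist_real_def\<close>)
    then show ?thesis
      using mu.cdf_diff_eq[OF True] by simp
  next
    case False
    then have "y < x" using that by auto
    moreover have "(F y - F x) / (y - x) = (F x - F y) / (x - y)"
      by (metis minus_diff_eq minus_divide_divide)
    moreover have "\<bar>measure (mu_Phi \<Phi>) {y<..x} / (x - y) - exp (- \<Phi> \<bar>x\<bar>) / Z_Phi \<Phi>\<bar> \<le> r / 2"
      by (rule measure_Ioc_difference_quotient[OF \<open>y < x\<close>]) (use d that in \<open>auto simp: dist_real_def\<close>)
    ultimately show ?thesis
      using mu.cdf_diff_eq[of y x] by simp
  qed
  then show "\<exists>d>0. \<forall>y. y \<noteq> x \<and> norm (y - x) < d \<longrightarrow>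
      norm ((F y - F x) / (y - x) - exp (- \<Phi> \<bar>x\<bar>) / Z_Phi \<Phi>) < r"
    using \<open>d > 0\<close> \<open>r > 0\<close> by (intro exI[of _ d]) force
qed

lemma cdf_pos: "0 < F x"
  using cdf_strict_mono[of "x - 1" x] mu.cdf_nonneg[of "x - 1"] by simp

lemma cdf_less_1: "F x < 1"
  using cdf_strict_mono[of x "x + 1"] mu.cdf_bounded_prob[of "x + 1"] by simp

lemma inj_cdf: "inj F"
  by (metis cdf_strict_mono injI less_irrefl linorder_neqE_linordered_idom)

lemma quantile_cdf: "quantile (F x) = x"
  by (rule inv_into_f_f[OF inj_cdf]) simp

lemma cdf_quantile:
  assumes "0 < t" "t < 1"
  shows "F (quantile t) = t"
proof -
  obtain x1 where x1: "F x1 < t"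
    using order_tendstoD(2)[OF mu.cdf_lim_at_bot assms(1)] by (meson eventually_at_bot_linorder order_refl)
  obtain x2 where x2: "F x2 > t"
    using order_tendstoD(1)[OF mu.cdf_lim_at_top_prob assms(2)] by (meson eventually_at_top_linorder order_refl)
  have "x1 \<le> x2"
    using cdf_strict_mono[of x2 x1] x1 x2 by fastforce
  moreover have "continuous_on {x1..x2} F"
    using isCont_cdf_mu_Phi by (simp add: continuous_at_imp_continuous_on)
  ultimately have "t \<in> range F"
    using IVT'[of F x1 t x2] x1 x2 by force
  then show ?thesis by (rule f_inv_into_f)
qed

lemma quantile_mono:
  assumes "0 < s" "s \<le> t" "t < 1"
  shows "quantile s \<le> quantile t"
  using cdf_strict_mono[of "quantile t" "quantile s"] cdf_quantile[of s] cdf_quantile[of t] assms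
  by fastforce

lemma emeasure_mu_Phi_reflect: "emeasure (mu_Phi \<Phi>) {..-x} = emeasure (mu_Phi \<Phi>) {x..}"
proof -
  let ?f = "\<lambda>s. ennreal (exp (- \<Phi> \<bar>s\<bar>) / Z_Phi \<Phi>) * indicator {..-x} s"
  have "emeasure (mu_Phi \<Phi>) {..-x} = (\<integral>\<^sup>+ s. ?f s \<partial>lborel)"
    by (rule emeasure_mu_Phi) simp
  also have "\<dots> = (\<integral>\<^sup>+ s. ?f (0 + (-1) * s) \<partial>lborel)"
    using nn_integral_real_affine[where c = "-1" and t = 0, of ?f] by simp
  also have "\<dots> = (\<integral>\<^sup>+ s. ennreal (exp (- \<Phi> \<bar>s\<bar>) / Z_Phi \<Phi>) * indicator {x..} s \<partial>lborel)"
    by (intro nn_integral_cong) (auto split: split_indicator)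
  also have "\<dots> = emeasure (mu_Phi \<Phi>) {x..}"
    by (rule emeasure_mu_Phi[symmetric]) simp
  finally show ?thesis .
qed

lemma cdf_neg_eq_tail: "F (- x) = measure (mu_Phi \<Phi>) {x..}"
  using emeasure_mu_Phi_reflect[of x] by (simp add: cdf_def measure_def)

lemma cdf_neg: "F (- x) = 1 - F x"
proof -
  have "measure (mu_Phi \<Phi>) {x} = 0"
    using isCont_cdf_mu_Phi mu.isCont_cdf by blast
  moreover have "{..x} = {..<x} \<union> {x}" by auto
  ultimately have "F x = measure (mu_Phi \<Phi>) {..<x}"
    using mu.finite_measure_Union[of "{..<x}" "{x}"] by (simp add: cdf_def)
  moreover have "measure (mu_Phi \<Phi>) {x..} = 1 - measure (mu_Phi \<Phi>) {..<x}"
    using mu.prob_compl[of "{..<x}"] by (simp add: Diff_eq Compl_lessThan)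
  ultimately show ?thesis
    using cdf_neg_eq_tail by simp
qed

lemma quantile_one_minus:
  assumes "0 < t" "t < 1"
  shows "quantile (1 - t) = - quantile t"
  using cdf_neg[of "quantile t"] cdf_quantile[OF assms] quantile_cdf[of "- quantile t"] by simp

lemma J_of_mu_Phi:
  assumes "0 < t" "t < 1" and "isCont (\<lambda>s. exp (- \<Phi> \<bar>s\<bar>)) (quantile t)"
  shows "J_of (mu_Phi \<Phi>) t = exp (- \<Phi> \<bar>quantile t\<bar>) / Z_Phi \<Phi>"
  unfolding J_of_def using assms DERIV_imp_deriv[OF cdf_has_real_derivative] by simp

lemma neg_quantile_tendsto_at_top: "filterlim (\<lambda>t. - quantile t) at_top (at_right 0)"
  unfolding filterlim_at_top
proof
  fix M :: real
  show "\<forall>\<^sub>F t in at_right 0. M \<le> - quantile t"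
    unfolding eventually_at_right_field
  proof (intro exI[of _ "F (- M)"] conjI allI impI)
    show "0 < F (- M)" by (rule cdf_pos)
    fix t assume t: "0 < t" "t < F (- M)"
    then have "F (quantile t) < F (- M)"
      using cdf_quantile[of t] cdf_less_1[of "- M"] by simp
    then show "M \<le> - quantile t"
      using cdf_strict_mono[of "- M" "quantile t"] by fastforce
  qed
qed

lemma cdf_neg_tendsto_0: "((\<lambda>y. F (- y)) \<longlongrightarrow> 0) at_top"
  using filterlim_compose[OF mu.cdf_lim_at_bot filterlim_uminus_at_bot_at_top] .

end

lemma ln_inverse_ge_ln2:
  fixes t :: real
  assumes "0 < t" "t \<le> 1 / 2"
  shows "ln 2 \<le> ln (1 / t)"
proof -
  have "2 \<le> 1 / t" using assms by (simp add: field_simps)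
  then show ?thesis using assms by (subst ln_le_cancel_iff) auto
qed

lemma L_Phi_one_minus: "L_Phi \<Phi> (1 - t) = L_Phi \<Phi> t"
  by (simp add: L_Phi_def min.commute)

lemma L_Phi_eq: "t \<le> 1 / 2 \<Longrightarrow> L_Phi \<Phi> t = t * rderiv \<Phi> (Phi_inv \<Phi> (ln (1 / t)))"
  by (simp add: L_Phi_def min_def)

locale concave_density_profile = concave_mono_profile + density_profile
begin

lemma Phi_exceeds:
  assumes "0 \<le> x"
  obtains w where "x < w" "\<Phi> x < \<Phi> w"
proof -
  obtain w where "0 \<le> w" "\<Phi> x < \<Phi> w" using Phi_unbounded by blast
  moreover have "x < w"
    using Phi_mono[of w x] calculation by force
  ultimately show ?thesis using that by blast
qed

lemma Phi_strict_mono: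
  assumes "0 \<le> x" "x < y"
  shows "\<Phi> x < \<Phi> y"
proof (rule ccontr)
  assume "\<not> \<Phi> x < \<Phi> y"
  then have "\<Phi> y = \<Phi> x" using Phi_mono[of x y] assms by simp
  obtain w where "y < w" "\<Phi> y < \<Phi> w" using Phi_exceeds[of y] assms by auto
  then have "0 < (\<Phi> w - \<Phi> y) / (w - y)" by simp
  also have "\<dots> \<le> (\<Phi> y - \<Phi> x) / (y - x)"
    using slope_le_left_slope[of x y w] assms \<open>y < w\<close> by simp
  finally show False using \<open>\<Phi> y = \<Phi> x\<close> by simp
qed

lemma rderiv_pos:
  assumes "0 < x"
  shows "0 < rderiv \<Phi> x"
proof -
  obtain w where "x < w" "\<Phi> x < \<Phi> w" using Phi_exceeds[of x] assms by auto
  then have "0 < (\<Phi> w - \<Phi> x) / (w - x)" by simp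
  also have "\<dots> \<le> rderiv \<Phi> x" using rderiv_ge_slope[of x w] assms \<open>x < w\<close> by simp
  finally show ?thesis .
qed

lemma inj_on_Phi: "inj_on \<Phi> {0..}"
  by (rule inj_onI) (metis Phi_strict_mono atLeast_iff less_irrefl linorder_neq_iff)

lemma Phi_inv_Phi: "0 \<le> x \<Longrightarrow> Phi_inv \<Phi> (\<Phi> x) = x"
  unfolding Phi_inv_def by (rule inv_into_f_f[OF inj_on_Phi]) simp

lemma Phi_inv_above:
  assumes "0 < b" "\<Phi> b \<le> V"
  shows "V \<in> \<Phi> ` {0..}" and "\<Phi> (Phi_inv \<Phi> V) = V" and "b \<le> Phi_inv \<Phi> V"
proof -
  obtain w where "0 \<le> w" "V < \<Phi> w"
    using Phi_unbounded by blast
  then have w: "b < w" "V < \<Phi> w"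
    using Phi_mono[of w b] assms by force+
  have "continuous_on {b..w} \<Phi>"
    using Phi_continuous_on assms by (auto intro: continuous_on_subset)
  then obtain x where x: "b \<le> x" "\<Phi> x = V"
    using IVT'[of \<Phi> b V w] assms w by auto
  then show "V \<in> \<Phi> ` {0..}"
    using assms by (auto intro!: image_eqI)
  then show "\<Phi> (Phi_inv \<Phi> V) = V"
    unfolding Phi_inv_def by (rule f_inv_into_f)
  show "b \<le> Phi_inv \<Phi> V"
    using Phi_inv_Phi[of x] x assms by simp
qed

lemma Phi_inv_mono:
  assumes "0 < b" "\<Phi> b \<le> V" "V \<le> W"
  shows "Phi_inv \<Phi> V \<le> Phi_inv \<Phi> W"
proof (rule ccontr)
  assume "\<not> ?thesis"
  then have "\<Phi> (Phi_inv \<Phi> W) < \<Phi> (Phi_inv \<Phi> V)"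
    using Phi_inv_above(3)[of b W] assms by (intro Phi_strict_mono) auto
  then show False
    using Phi_inv_above(2)[of b V] Phi_inv_above(2)[of b W] assms by simp
qed

lemma isCont_exp_neg_Phi_abs:
  assumes "x \<noteq> 0 \<or> continuous (at_right 0) \<Phi>"
  shows "isCont (\<lambda>s. exp (- \<Phi> \<bar>s\<bar>)) x"
proof -
  have "isCont (\<lambda>s. \<Phi> \<bar>s\<bar>) x"
  proof (cases "x = 0")
    case True
    have right: "((\<lambda>s. \<Phi> \<bar>s\<bar>) \<longlongrightarrow> \<Phi> 0) (at_right 0)"
      using assms True eventually_at_right_less[of 0]
      by (auto simp: continuous_within elim!: tendsto_cong[THEN iffD1, rotated] eventually_mono)
    then have "((\<lambda>s. \<Phi> \<bar>s\<bar>) \<longlongrightarrow> \<Phi> 0) (at_left 0)"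
      by (simp add: filterlim_at_left_to_right)
    with right show ?thesis
      using True by (simp add: continuous_at filterlim_split_at)
  next
    case False
    then have "isCont \<Phi> \<bar>x\<bar>"
      using Phi_continuous_on by (simp add: continuous_on_eq_continuous_at)
    then show ?thesis
      by (rule isCont_o2[rotated]) (intro continuous_intros)
  qed
  then show ?thesis by (intro continuous_intros)
qed

lemma Phi_inv_ln_inverse:
  assumes "0 < \<eta>" "\<Phi> \<eta> \<le> ln 2" "0 < t" "t \<le> 1 / 2"
  shows "ln (1 / t) \<in> \<Phi> ` {0..}" and "\<eta> \<le> Phi_inv \<Phi> (ln (1 / t))"
  using Phi_inv_above[OF assms(1) order_trans[OF assms(2) ln_inverse_ge_ln2[OF assms(3,4)]]] by simp_all

lemma L_Phi_well_defined:
  assumes "0 < \<eta>" "\<Phi> \<eta> \<le> ln 2" "0 < t" "t < 1"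
  shows "ln (1 / min t (1 - t)) \<in> \<Phi> ` {0..}
    \<and> (\<exists>D. (\<Phi> has_real_derivative D) (at_right (Phi_inv \<Phi> (ln (1 / min t (1 - t))))))"
proof -
  have "0 < min t (1 - t)" "min t (1 - t) \<le> 1 / 2"
    using assms unfolding min_def by auto
  note v = Phi_inv_ln_inverse[OF assms(1,2) this]
  then show ?thesis
    using has_right_derivative[of "Phi_inv \<Phi> (ln (1 / min t (1 - t)))"] assms(1) by auto
qed

lemma L_Phi_pos:
  assumes "0 < \<eta>" "\<Phi> \<eta> \<le> ln 2" "0 < t" "t \<le> 1 / 2"
  shows "0 < L_Phi \<Phi> t"
  using Phi_inv_ln_inverse(2)[OF assms] rderiv_pos[of "Phi_inv \<Phi> (ln (1 / t))"] assms
  by (simp add: L_Phi_eq)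

lemma L_Phi_bounds:
  assumes "0 < \<eta>" "\<Phi> \<eta> \<le> ln 2" "0 < \<delta>" "\<delta> \<le> t" "t \<le> 1 / 2"
  shows "\<delta> * rderiv \<Phi> (Phi_inv \<Phi> (ln (1 / \<delta>))) \<le> L_Phi \<Phi> t"
    and "L_Phi \<Phi> t \<le> rderiv \<Phi> \<eta> / 2"
proof -
  let ?v = "\<lambda>t. Phi_inv \<Phi> (ln (1 / t))"
  have "\<Phi> \<eta> \<le> ln (1 / t)" "ln (1 / t) \<le> ln (1 / \<delta>)"
    using ln_inverse_ge_ln2[of t] assms by (simp_all add: ln_div)
  then have v: "\<eta> \<le> ?v t" "?v t \<le> ?v \<delta>"
    using Phi_inv_above(3) Phi_inv_mono assms by blast+
  have "rderiv \<Phi> (?v \<delta>) \<le> rderiv \<Phi> (?v t)" "rderiv \<Phi> (?v t) \<le> rderiv \<Phi> \<eta>"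
    using rderiv_antimono[of "?v t" "?v \<delta>"] rderiv_antimono[of \<eta> "?v t"] v assms
    by (cases "?v t = ?v \<delta>"; cases "\<eta> = ?v t"; simp)+
  moreover have "0 < rderiv \<Phi> (?v \<delta>)"
    using rderiv_pos v assms by simp
  ultimately have "\<delta> * rderiv \<Phi> (?v \<delta>) \<le> t * rderiv \<Phi> (?v t)"
    "t * rderiv \<Phi> (?v t) \<le> 1 / 2 * rderiv \<Phi> \<eta>"
    using assms by (intro mult_mono; simp)+
  then show "\<delta> * rderiv \<Phi> (?v \<delta>) \<le> L_Phi \<Phi> t" "L_Phi \<Phi> t \<le> rderiv \<Phi> \<eta> / 2"
    using assms by (simp_all add: L_Phi_eq)
qed

lemma J_of_one_minus:
  assumes "continuous (at_right 0) \<Phi>" "0 < t" "t < 1"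
  shows "J_of (mu_Phi \<Phi>) (1 - t) = J_of (mu_Phi \<Phi>) t"
  using J_of_mu_Phi[of t] J_of_mu_Phi[of "1 - t"] isCont_exp_neg_Phi_abs assms
  by (simp add: quantile_one_minus)

lemma J_of_bounds:
  assumes "continuous (at_right 0) \<Phi>" "0 < \<delta>" "\<delta> \<le> t" "t \<le> 1 / 2"
  shows "exp (- \<Phi> (- quantile \<delta>)) / Z_Phi \<Phi> \<le> J_of (mu_Phi \<Phi>) t"
    and "J_of (mu_Phi \<Phi>) t \<le> exp (- \<Phi> 0) / Z_Phi \<Phi>"
proof -
  have J: "J_of (mu_Phi \<Phi>) t = exp (- \<Phi> \<bar>quantile t\<bar>) / Z_Phi \<Phi>"
    using J_of_mu_Phi isCont_exp_neg_Phi_abs assms by simp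
  have "F (quantile t) \<le> F 0"
    using cdf_quantile[of t] cdf_neg[of 0] assms by simp
  then have "quantile \<delta> \<le> quantile t" "quantile t \<le> 0"
    using quantile_mono[of \<delta> t] cdf_strict_mono[of 0 "quantile t"] assms by force+
  then show "exp (- \<Phi> (- quantile \<delta>)) / Z_Phi \<Phi> \<le> J_of (mu_Phi \<Phi>) t"
    using Phi_mono[of "\<bar>quantile t\<bar>" "- quantile \<delta>"] Z_Phi_pos unfolding J
    by (simp add: divide_right_mono)
  show "J_of (mu_Phi \<Phi>) t \<le> exp (- \<Phi> 0) / Z_Phi \<Phi>"
    using exp_neg_Phi_abs_le Z_Phi_pos unfolding J by (simp add: divide_right_mono)
qed

lemma J_of_L_Phi_bounded_away_from_0:
  assumes right_cont: "continuous (at_right 0) \<Phi>" and \<eta>: "0 < \<eta>" "\<Phi> \<eta> \<le> ln 2"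
    and \<delta>: "0 < \<delta>" "\<delta> \<le> 1 / 2"
  shows "\<exists>j1 j2 l1 l2. 0 < j1 \<and> 0 < l1 \<and> 0 < l2 \<and> (\<forall>t\<in>{\<delta>..1 / 2}.
    j1 \<le> J_of (mu_Phi \<Phi>) t \<and> J_of (mu_Phi \<Phi>) t \<le> j2 \<and> l1 \<le> L_Phi \<Phi> t \<and> L_Phi \<Phi> t \<le> l2)"
proof (intro exI conjI ballI)
  show "0 < exp (- \<Phi> (- quantile \<delta>)) / Z_Phi \<Phi>"
    using Z_Phi_pos by simp
  show "0 < \<delta> * rderiv \<Phi> (Phi_inv \<Phi> (ln (1 / \<delta>)))"
    using Phi_inv_ln_inverse(2)[OF \<eta> \<delta>] rderiv_pos \<eta> \<delta> by simp
  show "0 < rderiv \<Phi> \<eta> / 2"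
    using rderiv_pos \<eta> by simp
  fix t
  assume "t \<in> {\<delta>..1 / 2}"
  then have t: "\<delta> \<le> t" "t \<le> 1 / 2" by auto
  show "exp (- \<Phi> (- quantile \<delta>)) / Z_Phi \<Phi> \<le> J_of (mu_Phi \<Phi>) t"
    "J_of (mu_Phi \<Phi>) t \<le> exp (- \<Phi> 0) / Z_Phi \<Phi>"
    by (rule J_of_bounds[OF right_cont \<delta>(1) t])+
  show "\<delta> * rderiv \<Phi> (Phi_inv \<Phi> (ln (1 / \<delta>))) \<le> L_Phi \<Phi> t" "L_Phi \<Phi> t \<le> rderiv \<Phi> \<eta> / 2"
    by (rule L_Phi_bounds[OF \<eta> \<delta>(1) t])+
qed

lemma comparable_on_unit_interval:
  assumes right_cont: "continuous (at_right 0) \<Phi>"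
    and half: "\<forall>t\<in>{0<..1/2}. k1 * L_Phi \<Phi> t \<le> J_of (mu_Phi \<Phi>) t \<and> J_of (mu_Phi \<Phi>) t \<le> k2 * L_Phi \<Phi> t"
  shows "\<forall>t\<in>{0..1}. k1 * L_Phi \<Phi> t \<le> J_of (mu_Phi \<Phi>) t \<and> J_of (mu_Phi \<Phi>) t \<le> k2 * L_Phi \<Phi> t"
proof
  fix t :: real
  assume "t \<in> {0..1}"
  then consider "t = 0 \<or> t = 1" | "0 < t" "t \<le> 1 / 2" | "1 / 2 < t" "t < 1"
    by fastforce
  then show "k1 * L_Phi \<Phi> t \<le> J_of (mu_Phi \<Phi>) t \<and> J_of (mu_Phi \<Phi>) t \<le> k2 * L_Phi \<Phi> t"
  proof cases
    case 1
    then show ?thesis by (auto simp: J_of_def L_Phi_def)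
  next
    case 2
    then show ?thesis using half by simp
  next
    case 3
    then show ?thesis
      using half J_of_one_minus[OF right_cont, of "1 - t"] L_Phi_one_minus[of \<Phi> "1 - t"] by simp
  qed
qed

end

lemma nn_integral_exp_neg_tail:
  fixes G g :: "real \<Rightarrow> real"
  assumes meas: "(\<lambda>s. indicator {y..} s * g s) \<in> borel_measurable borel"
    and G_meas: "(\<lambda>s. indicator {y..} s * G s) \<in> borel_measurable borel"
    and deriv: "\<And>s. y \<le> s \<Longrightarrow> (G has_real_derivative g s) (at s)"
    and nonneg: "\<And>s. y \<le> s \<Longrightarrow> 0 \<le> g s"
    and lim: "filterlim G at_top at_top" and K: "0 \<le> K"
  shows "(\<integral>\<^sup>+s. ennreal (K * exp (- G s) * g s) * indicator {y..} s \<partial>lborel) = ennreal (K * exp (- G y))"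
proof -
  let ?h = "\<lambda>s. K * exp (- (indicator {y..} s * G s)) * (indicator {y..} s * g s)"
  have "(\<integral>\<^sup>+s. ennreal (?h s) * indicator {y..} s \<partial>lborel) = ennreal (0 - - K * exp (- G y))"
  proof (rule nn_integral_FTC_atLeast[where F = "\<lambda>s. - K * exp (- G s)"])
    show "?h \<in> borel_measurable borel" using meas G_meas by measurable
    show "((\<lambda>s. - K * exp (- G s)) has_real_derivative ?h s) (at s)" if "y \<le> s" for s
      using that by (auto intro!: derivative_eq_intros deriv)
    show "0 \<le> ?h s" if "y \<le> s" for s
      using that K nonneg by simp
    have "((\<lambda>s. exp (- G s)) \<longlongrightarrow> 0) at_top"
      using filterlim_compose[OF exp_at_bot filterlim_uminus_at_top[THEN iffD1, OF lim]] .
    then show "((\<lambda>s. - K * exp (- G s)) \<longlongrightarrow> 0) at_top"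
      using tendsto_mult_right_zero[of _ _ "- K"] by blast
  qed
  moreover have "ennreal (?h s) * indicator {y..} s = ennreal (K * exp (- G s) * g s) * indicator {y..} s" for s
    by (simp split: split_indicator)
  ultimately show ?thesis
    by simp
qed

lemma convex_on_derivative_mono:
  fixes f :: "real \<Rightarrow> real"
  assumes "convex_on S f" "connected S" "x \<in> interior S" "z \<in> interior S" "x \<le> z"
    and "(f has_real_derivative f' x) (at x)" "(f has_real_derivative f' z) (at z)"
  shows "f' x \<le> f' z"
proof (cases "x = z")
  case False
  have "x \<in> S" "z \<in> S"
    using assms(3,4) interior_subset by blast+
  then have "f' x * (z - x) \<le> f z - f x" "f' z * (x - z) \<le> f x - f z"
    using convex_on_imp_above_tangent[OF assms(1,2)] assms(3,4,6,7)
    by (blast intro: has_field_derivative_at_within)+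
  then have "f' x * (z - x) \<le> f' z * (z - x)"
    by (simp add: algebra_simps)
  then show ?thesis
    using False assms(5) by simp
qed simp

lemma scaled_bounds_of_bounds:
  fixes f g :: real
  assumes "j1 \<le> f" "f \<le> j2" "l1 \<le> g" "g \<le> l2" "0 < j1" "0 < l1"
  shows "j1 / l2 * g \<le> f \<and> f \<le> j2 / l1 * g"
proof -
  have "0 < l2" "0 < j2"
    using assms by linarith+
  have "j1 / l2 * g \<le> j1 / l2 * l2"
    by (rule mult_left_mono) (use assms \<open>0 < l2\<close> in simp_all)
  moreover have "j2 / l1 * l1 \<le> j2 / l1 * g"
    by (rule mult_left_mono) (use assms \<open>0 < j2\<close> in simp_all)
  ultimately show ?thesis
    using assms \<open>0 < l2\<close> by simp
qed

lemma bounded_ratio_from_limit: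
  fixes f g :: "real \<Rightarrow> real"
  assumes "0 < h" and lim: "((\<lambda>t. f t / g t) \<longlongrightarrow> 1) (at_right 0)"
    and g_pos: "\<And>t. 0 < t \<Longrightarrow> t \<le> h \<Longrightarrow> 0 < g t"
    and away_from_0: "\<And>\<delta>. 0 < \<delta> \<Longrightarrow> \<delta> \<le> h \<Longrightarrow> \<exists>j1 j2 l1 l2. 0 < j1 \<and> 0 < l1 \<and> 0 < l2 \<and>
      (\<forall>t\<in>{\<delta>..h}. j1 \<le> f t \<and> f t \<le> j2 \<and> l1 \<le> g t \<and> g t \<le> l2)"
  shows "\<exists>k1 k2. 0 < k1 \<and> 0 < k2 \<and> (\<forall>t\<in>{0<..h}. k1 * g t \<le> f t \<and> f t \<le> k2 * g t)"
proof -
  have "\<forall>\<^sub>F t in at_right 0. 1 / 2 < f t / g t" "\<forall>\<^sub>F t in at_right 0. f t / g t < 2"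
    by (rule order_tendstoD[OF lim]; simp)+
  then have "\<forall>\<^sub>F t in at_right 0. 1 / 2 < f t / g t \<and> f t / g t < 2"
    by (rule eventually_conj)
  then obtain \<delta>0 where "0 < \<delta>0" and near_0': "\<And>t. 0 < t \<Longrightarrow> t < \<delta>0 \<Longrightarrow> 1 / 2 < f t / g t \<and> f t / g t < 2"
    unfolding eventually_at_right_field by auto
  define \<delta> where "\<delta> = min \<delta>0 h"
  have "0 < \<delta>" "\<delta> \<le> h" and near_0: "\<And>t. 0 < t \<Longrightarrow> t < \<delta> \<Longrightarrow> 1 / 2 < f t / g t \<and> f t / g t < 2"
    using \<open>0 < \<delta>0\<close> \<open>0 < h\<close> near_0' by (auto simp: \<delta>_def)
  obtain j1 j2 l1 l2 where pos: "0 < j1" "0 < l1" "0 < l2"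
    and bounds: "\<forall>t\<in>{\<delta>..h}. j1 \<le> f t \<and> f t \<le> j2 \<and> l1 \<le> g t \<and> g t \<le> l2"
    using away_from_0[OF \<open>0 < \<delta>\<close> \<open>\<delta> \<le> h\<close>] by blast
  define m where "m = j1 / l2"
  define M where "M = j2 / l1"
  have mid: "m * g t \<le> f t \<and> f t \<le> M * g t" if "\<delta> \<le> t" "t \<le> h" for t
    using scaled_bounds_of_bounds[of j1 "f t" j2 l1 "g t" l2] bounds that pos by (simp add: m_def M_def)
  have "0 < m" using pos by (simp add: m_def)
  have "min (1 / 2) m * g t \<le> f t \<and> f t \<le> max 2 M * g t" if "0 < t" "t \<le> h" for t
  proof -
    have g: "0 < g t" by (rule g_pos[OF that])
    have "min (1 / 2) m * g t \<le> f t \<and> f t \<le> max 2 M * g t"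
      if "c * g t \<le> f t" "f t \<le> C * g t" "min (1 / 2) m \<le> c" "C \<le> max 2 M" for c C
      using mult_right_mono[OF that(3), of "g t"] mult_right_mono[OF that(4), of "g t"] that(1,2) g
      by linarith
    moreover have "1 / 2 * g t \<le> f t \<and> f t \<le> 2 * g t \<or> m * g t \<le> f t \<and> f t \<le> M * g t"
    proof (cases "t < \<delta>")
      case True
      then show ?thesis
        using near_0[OF \<open>0 < t\<close>] g by (simp add: field_simps)
    qed (use mid that in force)
    ultimately show ?thesis
      by fastforce
  qed
  then show ?thesis
    using \<open>0 < m\<close> by (intro exI[of _ "min (1 / 2) m"] exI[of _ "max 2 M"]) auto
qed

lemma right_continuous_exists_less:
  fixes f :: "real \<Rightarrow> real"
  assumes "continuous (at_right 0) f" "f 0 < c"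
  obtains \<eta> where "0 < \<eta>" "f \<eta> < c"
proof -
  have "\<forall>\<^sub>F x in at_right 0. f x < c"
    using order_tendstoD(2)[of f "f 0" "at_right 0" c] assms by (simp add: continuous_within)
  then obtain b :: real where "0 < b" "\<And>x. 0 < x \<Longrightarrow> x < b \<Longrightarrow> f x < c"
    unfolding eventually_at_right_field by blast
  then show ?thesis
    using that[of "b / 2"] by simp
qed

locale regular_tail_profile = concave_density_profile +
  fixes a \<theta> :: real and \<phi> :: "real \<Rightarrow> real"
  assumes a_pos: "0 < a"
    and Phi_derivative: "\<And>x. a < x \<Longrightarrow> (\<Phi> has_real_derivative \<phi> x) (at x)"
    and phi_continuous_on: "continuous_on {a<..} \<phi>"
    and theta_gt_1: "1 < \<theta>"
    and Phi_pos: "\<And>x. a < x \<Longrightarrow> 0 < \<Phi> x"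
    and convex_Phi_powr: "convex_on {a<..} (\<lambda>x. \<Phi> x powr \<theta>)"
begin

lemma rderiv_eq_phi: "a < x \<Longrightarrow> rderiv \<Phi> x = \<phi> x"
  by (rule rderiv_eq_deriv[OF Phi_derivative])

lemma phi_pos: "a < x \<Longrightarrow> 0 < \<phi> x"
  using rderiv_pos[of x] a_pos rderiv_eq_phi by simp

lemma phi_antimono: "a < x \<Longrightarrow> x \<le> z \<Longrightarrow> \<phi> z \<le> \<phi> x"
  using rderiv_antimono[of x z] rderiv_eq_phi[of x] rderiv_eq_phi[of z] a_pos
  by (cases "x = z") auto

text \<open>Convexity of \<open>\<Phi> powr \<theta>\<close> means that its derivative \<open>\<theta> \<phi> \<Phi> powr (\<theta> - 1)\<close> increases.\<close>
lemma phi_Phi_powr_mono: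
  assumes "a < x" "x \<le> z"
  shows "\<phi> x * \<Phi> x powr (\<theta> - 1) \<le> \<phi> z * \<Phi> z powr (\<theta> - 1)"
proof -
  have deriv: "((\<lambda>x. \<Phi> x powr \<theta>) has_real_derivative \<theta> * (\<phi> s * \<Phi> s powr (\<theta> - 1))) (at s)"
    if "a < s" for s
    using has_real_derivative_powr'[OF Phi_derivative[OF that] DERIV_const, of \<theta>] Phi_pos[OF that]
    by (simp add: powr_diff field_simps)
  have "\<theta> * (\<phi> x * \<Phi> x powr (\<theta> - 1)) \<le> \<theta> * (\<phi> z * \<Phi> z powr (\<theta> - 1))"
    using assms deriv[of x] deriv[of z]
    by (intro convex_on_derivative_mono[OF convex_Phi_powr connected_Ioi,
          where f' = "\<lambda>s. \<theta> * (\<phi> s * \<Phi> s powr (\<theta> - 1))"]) (auto simp: interior_open)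
  then show ?thesis
    using theta_gt_1 by simp
qed

lemma phi_ratio_lower:
  assumes "a < x" "x \<le> z"
  shows "exp (- ((\<theta> - 1) / \<Phi> x) * (\<Phi> z - \<Phi> x)) \<le> \<phi> z / \<phi> x"
proof -
  have Px: "\<Phi> x > 0" and Pz: "\<Phi> z > 0" and "\<phi> x > 0"
    using Phi_pos phi_pos assms by auto
  have "(\<theta> - 1) * ln (\<Phi> z / \<Phi> x) \<le> (\<theta> - 1) * (\<Phi> z / \<Phi> x - 1)"
    using Px Pz theta_gt_1 by (intro mult_left_mono ln_le_minus_one) auto
  then have "- ((\<theta> - 1) / \<Phi> x) * (\<Phi> z - \<Phi> x) \<le> (\<theta> - 1) * ln (\<Phi> x / \<Phi> z)"
    using Px Pz by (simp add: ln_div field_simps)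
  then have "exp (- ((\<theta> - 1) / \<Phi> x) * (\<Phi> z - \<Phi> x)) \<le> (\<Phi> x / \<Phi> z) powr (\<theta> - 1)"
    using Px Pz by (simp add: powr_def)
  also have "\<dots> \<le> \<phi> z / \<phi> x"
    using phi_Phi_powr_mono[OF assms] Px Pz \<open>\<phi> x > 0\<close> by (simp add: powr_divide field_simps)
  finally show ?thesis .
qed

lemma measure_atLeast_eq:
  "ennreal (measure (mu_Phi \<Phi>) {y..}) = (\<integral>\<^sup>+ s. ennreal (exp (- \<Phi> \<bar>s\<bar>) / Z_Phi \<Phi>) * indicator {y..} s \<partial>lborel)"
  using emeasure_mu_Phi[of "{y..}"] by (simp add: mu.emeasure_eq_measure)

text \<open>Concavity puts \<open>\<Phi>\<close> below its tangent at \<open>y\<close>, whose exponential integrates explicitly.\<close>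
lemma tail_measure_lower:
  assumes "a < y"
  shows "exp (- \<Phi> y) / (\<phi> y * Z_Phi \<Phi>) \<le> measure (mu_Phi \<Phi>) {y..}"
proof -
  define c where "c = \<phi> y"
  have c: "0 < c" and Z: "0 < Z_Phi \<Phi>" and "0 < y"
    using phi_pos assms Z_Phi_pos a_pos by (auto simp: c_def)
  let ?G = "\<lambda>s. (\<Phi> y - c * y) + c * s"
  let ?K = "1 / (c * Z_Phi \<Phi>)"
  have "ennreal (?K * exp (- ?G y)) = (\<integral>\<^sup>+ s. ennreal (?K * exp (- ?G s) * c) * indicator {y..} s \<partial>lborel)"
  proof (rule nn_integral_exp_neg_tail[symmetric])
    show "filterlim ?G at_top at_top"
      using c by (intro filterlim_tendsto_add_at_top[OF tendsto_const]
          filterlim_tendsto_pos_mult_at_top[OF tendsto_const _ filterlim_ident])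
  qed (use c Z in \<open>auto intro!: derivative_eq_intros\<close>)
  also have "\<dots> \<le> (\<integral>\<^sup>+ s. ennreal (exp (- \<Phi> \<bar>s\<bar>) / Z_Phi \<Phi>) * indicator {y..} s \<partial>lborel)"
  proof (intro nn_integral_mono)
    fix s
    have "\<Phi> s \<le> ?G s" if "y \<le> s"
      using Phi_le_tangent[OF \<open>0 < y\<close> Phi_derivative[OF assms]] that \<open>0 < y\<close>
      by (simp add: c_def algebra_simps)
    then show "ennreal (?K * exp (- ?G s) * c) * indicator {y..} s
        \<le> ennreal (exp (- \<Phi> \<bar>s\<bar>) / Z_Phi \<Phi>) * indicator {y..} s"
      using c Z \<open>0 < y\<close> by (auto split: split_indicator intro!: ennreal_leI divide_right_mono)
  qed
  also have "\<dots> = ennreal (measure (mu_Phi \<Phi>) {y..})"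
    by (rule measure_atLeast_eq[symmetric])
  finally show ?thesis
    using c Z by (simp add: ennreal_le_iff c_def mult.commute)
qed

text \<open>With \<open>\<kappa> = (\<theta> - 1) / \<Phi> y\<close>, this majorant of \<open>exp (- \<Phi>)\<close> on \<open>[y, \<infinity>)\<close> is an exact
  derivative, with antiderivative \<open>- exp (- (\<kappa> \<Phi> y + (1 - \<kappa>) \<Phi> s)) / ((1 - \<kappa>) \<phi> y)\<close>.\<close>
lemma exp_neg_Phi_le_tail_majorant:
  assumes "a < y" "y \<le> s" and \<kappa>: "\<kappa> = (\<theta> - 1) / \<Phi> y"
  shows "exp (- \<Phi> s) \<le> exp (- (\<kappa> * \<Phi> y + (1 - \<kappa>) * \<Phi> s)) * (\<phi> s / \<phi> y)"
proof -
  have "exp (- \<Phi> s) = exp (- (\<kappa> * \<Phi> y + (1 - \<kappa>) * \<Phi> s)) * exp (- \<kappa> * (\<Phi> s - \<Phi> y))"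
    by (simp add: exp_add[symmetric] algebra_simps)
  also have "\<dots> \<le> exp (- (\<kappa> * \<Phi> y + (1 - \<kappa>) * \<Phi> s)) * (\<phi> s / \<phi> y)"
    unfolding \<kappa> by (intro mult_left_mono phi_ratio_lower[OF assms(1,2)]) simp
  finally show ?thesis .
qed

lemma tail_measure_upper:
  assumes "a < y" and small: "(\<theta> - 1) / \<Phi> y < 1"
  shows "measure (mu_Phi \<Phi>) {y..} \<le> exp (- \<Phi> y) / ((1 - (\<theta> - 1) / \<Phi> y) * \<phi> y * Z_Phi \<Phi>)"
proof -
  define c where "c = \<phi> y"
  define \<kappa> where "\<kappa> = (\<theta> - 1) / \<Phi> y"
  have c: "0 < c" and Z: "0 < Z_Phi \<Phi>" and "0 < y" and \<kappa>: "0 \<le> \<kappa>" "\<kappa> < 1"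
    using phi_pos assms Z_Phi_pos a_pos theta_gt_1 Phi_pos[OF assms(1)] by (auto simp: c_def \<kappa>_def)
  let ?G = "\<lambda>s. \<kappa> * \<Phi> y + (1 - \<kappa>) * \<Phi> s"
  let ?K = "1 / ((1 - \<kappa>) * c * Z_Phi \<Phi>)"
  have cont: "continuous_on {y..} \<Phi>" "continuous_on {y..} \<phi>"
    using Phi_continuous_on phi_continuous_on \<open>0 < y\<close> assms(1)
    by (auto intro: continuous_on_subset)
  have "ennreal (measure (mu_Phi \<Phi>) {y..})
      = (\<integral>\<^sup>+ s. ennreal (exp (- \<Phi> \<bar>s\<bar>) / Z_Phi \<Phi>) * indicator {y..} s \<partial>lborel)"
    by (rule measure_atLeast_eq)
  also have "\<dots> \<le> (\<integral>\<^sup>+ s. ennreal (?K * exp (- ?G s) * ((1 - \<kappa>) * \<phi> s)) * indicator {y..} s \<partial>lborel)"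
  proof (intro nn_integral_mono)
    fix s
    have "exp (- \<Phi> s) \<le> ?K * exp (- ?G s) * ((1 - \<kappa>) * \<phi> s) * Z_Phi \<Phi>" if "y \<le> s"
    proof -
      have "exp (- \<Phi> s) \<le> exp (- ?G s) * (\<phi> s / c)"
        unfolding c_def by (rule exp_neg_Phi_le_tail_majorant[OF assms(1) that \<kappa>_def])
      also have "\<dots> = ?K * exp (- ?G s) * ((1 - \<kappa>) * \<phi> s) * Z_Phi \<Phi>"
        using c Z \<kappa> by simp
      finally show ?thesis .
    qed
    then show "ennreal (exp (- \<Phi> \<bar>s\<bar>) / Z_Phi \<Phi>) * indicator {y..} s
        \<le> ennreal (?K * exp (- ?G s) * ((1 - \<kappa>) * \<phi> s)) * indicator {y..} s"
      using Z \<open>0 < y\<close> by (auto split: split_indicator intro!: ennreal_leI simp: pos_divide_le_eq)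
  qed
  also have "\<dots> = ennreal (?K * exp (- ?G y))"
  proof (rule nn_integral_exp_neg_tail)
    show "(\<lambda>s. indicator {y..} s * ((1 - \<kappa>) * \<phi> s)) \<in> borel_measurable borel"
      using borel_measurable_continuous_on_indicator[of "{y..}" "\<lambda>s. (1 - \<kappa>) * \<phi> s"] cont
      by (simp add: continuous_on_mult_left)
    show "(\<lambda>s. indicator {y..} s * ?G s) \<in> borel_measurable borel"
      using borel_measurable_continuous_on_indicator[of "{y..}" ?G] cont
      by (simp add: continuous_intros)
    show "(?G has_real_derivative (1 - \<kappa>) * \<phi> s) (at s)" "0 \<le> (1 - \<kappa>) * \<phi> s" if "y \<le> s" for s
      using that assms(1) \<kappa> phi_pos[of s] by (auto intro!: derivative_eq_intros Phi_derivative)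
    show "filterlim ?G at_top at_top"
      using \<kappa> by (intro filterlim_tendsto_add_at_top[OF tendsto_const]
          filterlim_tendsto_pos_mult_at_top[OF tendsto_const _ Phi_tendsto_at_top]) auto
  qed (use c Z \<kappa> in auto)
  also have "?K * exp (- ?G y) = exp (- \<Phi> y) / ((1 - \<kappa>) * c * Z_Phi \<Phi>)"
    by (simp add: algebra_simps)
  finally show ?thesis
    using c Z \<kappa> by (simp add: c_def \<kappa>_def)
qed

lemma J_of_cdf_neg:
  assumes "0 < y"
  shows "J_of (mu_Phi \<Phi>) (F (- y)) = exp (- \<Phi> y) / Z_Phi \<Phi>"
  using J_of_mu_Phi[of "F (- y)"] isCont_exp_neg_Phi_abs[of "- y"] assms
  by (simp add: cdf_pos cdf_less_1 quantile_cdf)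

lemma inverse_Phi_tendsto_0: "((\<lambda>y. c / \<Phi> y) \<longlongrightarrow> 0) at_top"
  by (rule tendsto_divide_0[OF tendsto_const filterlim_at_top_imp_at_infinity[OF Phi_tendsto_at_top]])

lemma J_over_tail_tendsto: "((\<lambda>y. J_of (mu_Phi \<Phi>) (F (- y)) / (F (- y) * \<phi> y)) \<longlongrightarrow> 1) at_top"
proof (rule tendsto_sandwich)
  have "\<forall>\<^sub>F y in at_top. a < y \<and> (\<theta> - 1) / \<Phi> y < 1"
    using order_tendstoD(2)[OF inverse_Phi_tendsto_0[of "\<theta> - 1"] zero_less_one] eventually_gt_at_top[of a]
    by eventually_elim simp
  then have "\<forall>\<^sub>F y in at_top. 1 - (\<theta> - 1) / \<Phi> y \<le> J_of (mu_Phi \<Phi>) (F (- y)) / (F (- y) * \<phi> y)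
      \<and> J_of (mu_Phi \<Phi>) (F (- y)) / (F (- y) * \<phi> y) \<le> 1"
  proof eventually_elim
    case (elim y)
    then have pos: "0 < y" "0 < \<phi> y" "0 < Z_Phi \<Phi>" "0 < F (- y)" "0 < 1 - (\<theta> - 1) / \<Phi> y"
      using a_pos phi_pos Z_Phi_pos cdf_pos by auto
    have "F (- y) * ((1 - (\<theta> - 1) / \<Phi> y) * \<phi> y * Z_Phi \<Phi>) \<le> exp (- \<Phi> y)"
      using tail_measure_upper[of y] elim pos by (simp add: cdf_neg_eq_tail pos_le_divide_eq)
    moreover have "exp (- \<Phi> y) \<le> F (- y) * (\<phi> y * Z_Phi \<Phi>)"
      using tail_measure_lower[of y] elim pos by (simp add: cdf_neg_eq_tail pos_divide_le_eq)
    ultimately show ?case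
      using pos by (simp add: J_of_cdf_neg field_simps)
  qed
  then show "\<forall>\<^sub>F y in at_top. 1 - (\<theta> - 1) / \<Phi> y \<le> J_of (mu_Phi \<Phi>) (F (- y)) / (F (- y) * \<phi> y)"
    and "\<forall>\<^sub>F y in at_top. J_of (mu_Phi \<Phi>) (F (- y)) / (F (- y) * \<phi> y) \<le> 1"
    by (auto elim: eventually_mono)
  show "((\<lambda>y. 1 - (\<theta> - 1) / \<Phi> y) \<longlongrightarrow> 1) at_top"
    using tendsto_diff[OF tendsto_const inverse_Phi_tendsto_0, of 1] by simp
qed simp

text \<open>Since \<open>\<phi>\<close> decreases while \<open>\<phi> \<Phi> powr (\<theta> - 1)\<close> increases, \<open>ln \<phi>\<close> lies between two constants
  minus \<open>(\<theta> - 1) ln \<Phi>\<close>, which is \<open>o(\<Phi>)\<close>.\<close>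
lemma ln_phi_over_Phi_tendsto: "((\<lambda>y. ln (\<phi> y) / \<Phi> y) \<longlongrightarrow> 0) at_top"
proof (rule tendsto_sandwich)
  define y0 where "y0 = a + 1"
  have y0: "a < y0" by (simp add: y0_def)
  define g0 where "g0 = \<phi> y0 * \<Phi> y0 powr (\<theta> - 1)"
  have g0: "g0 > 0" using phi_pos[OF y0] Phi_pos[OF y0] by (simp add: g0_def)
  show "\<forall>\<^sub>F y in at_top. ln (\<phi> y) / \<Phi> y \<le> ln (\<phi> y0) / \<Phi> y"
    using eventually_ge_at_top[of y0]
  proof eventually_elim
    case (elim y)
    then show ?case
      using phi_antimono[OF y0 elim] phi_pos[of y] Phi_pos[of y] y0 by (simp add: divide_right_mono)
  qed
  show "\<forall>\<^sub>F y in at_top. (ln g0 - (\<theta> - 1) * ln (\<Phi> y)) / \<Phi> y \<le> ln (\<phi> y) / \<Phi> y"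
    using eventually_ge_at_top[of y0]
  proof eventually_elim
    case (elim y)
    have "\<Phi> y > 0" "\<phi> y > 0" using Phi_pos phi_pos y0 elim by auto
    have "ln g0 \<le> ln (\<phi> y * \<Phi> y powr (\<theta> - 1))"
      unfolding g0_def using phi_Phi_powr_mono[OF y0 elim] g0 by (simp add: g0_def)
    also have "\<dots> = ln (\<phi> y) + (\<theta> - 1) * ln (\<Phi> y)"
      using \<open>\<Phi> y > 0\<close> \<open>\<phi> y > 0\<close> by (simp add: ln_mult ln_powr)
    finally show ?case using \<open>\<Phi> y > 0\<close> by (simp add: divide_right_mono)
  qed
  show "((\<lambda>y. ln (\<phi> y0) / \<Phi> y) \<longlongrightarrow> 0) at_top"
    by (rule inverse_Phi_tendsto_0)
  have "((\<lambda>x. ln g0 * (1 / x) - (\<theta> - 1) * (ln x / x)) \<longlongrightarrow> ln g0 * 0 - (\<theta> - 1) * 0) at_top"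
    by (intro tendsto_intros ln_x_over_x_tendsto_0 tendsto_divide_0[OF tendsto_const]
        filterlim_at_top_imp_at_infinity[OF filterlim_ident])
  then show "((\<lambda>y. (ln g0 - (\<theta> - 1) * ln (\<Phi> y)) / \<Phi> y) \<longlongrightarrow> 0) at_top"
    using filterlim_compose[OF _ Phi_tendsto_at_top] by (simp add: diff_divide_distrib)
qed

lemma ln_inverse_tail_over_Phi_tendsto: "((\<lambda>y. ln (1 / F (- y)) / \<Phi> y) \<longlongrightarrow> 1) at_top"
proof -
  let ?r = "\<lambda>y. J_of (mu_Phi \<Phi>) (F (- y)) / (F (- y) * \<phi> y)"
  have "\<forall>\<^sub>F y in at_top. ln (1 / F (- y)) / \<Phi> y
      = 1 + ln (Z_Phi \<Phi>) / \<Phi> y + ln (\<phi> y) / \<Phi> y + ln (?r y) / \<Phi> y"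
    using eventually_gt_at_top[of a]
  proof eventually_elim
    case (elim y)
    then have "0 < y" "0 < \<phi> y" "0 < Z_Phi \<Phi>" "0 < F (- y)" "0 < \<Phi> y"
      using a_pos phi_pos Z_Phi_pos cdf_pos Phi_pos by auto
    then show ?case
      by (simp add: J_of_cdf_neg ln_div ln_mult add_divide_distrib diff_divide_distrib)
  qed
  moreover have "((\<lambda>y. 1 + ln (Z_Phi \<Phi>) / \<Phi> y + ln (\<phi> y) / \<Phi> y + ln (?r y) / \<Phi> y) \<longlongrightarrow> 1 + 0 + 0 + 0) at_top"
    using J_over_tail_tendsto
    by (intro tendsto_intros inverse_Phi_tendsto_0 ln_phi_over_Phi_tendsto
        tendsto_divide_0[OF _ filterlim_at_top_imp_at_infinity[OF Phi_tendsto_at_top]])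
      (auto dest: tendsto_ln)
  ultimately show ?thesis
    by (simp add: tendsto_cong)
qed

lemma phi_ratio_between:
  assumes "a < x" "a < z"
  shows "min 1 ((\<Phi> z / \<Phi> x) powr (\<theta> - 1)) \<le> \<phi> x / \<phi> z
    \<and> \<phi> x / \<phi> z \<le> max 1 ((\<Phi> z / \<Phi> x) powr (\<theta> - 1))"
proof -
  have pos: "0 < \<phi> x" "0 < \<phi> z" "0 < \<Phi> x" "0 < \<Phi> z"
    using assms phi_pos Phi_pos by auto
  have powr_iff: "\<phi> x / \<phi> z \<le> (\<Phi> z / \<Phi> x) powr (\<theta> - 1) \<longleftrightarrow>
      \<phi> x * \<Phi> x powr (\<theta> - 1) \<le> \<phi> z * \<Phi> z powr (\<theta> - 1)"
    "(\<Phi> z / \<Phi> x) powr (\<theta> - 1) \<le> \<phi> x / \<phi> z \<longleftrightarrow>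
      \<phi> z * \<Phi> z powr (\<theta> - 1) \<le> \<phi> x * \<Phi> x powr (\<theta> - 1)"
    using pos by (simp_all add: powr_divide field_simps)
  show ?thesis
  proof (cases "x \<le> z")
    case True
    then show ?thesis
      using phi_antimono[OF assms(1) True] phi_Phi_powr_mono[OF assms(1) True] powr_iff(1) pos
      by (simp add: min_le_iff_disj le_max_iff_disj)
  next
    case False
    then have "z \<le> x" by simp
    then show ?thesis
      using phi_antimono[OF assms(2)] phi_Phi_powr_mono[OF assms(2)] powr_iff(2) pos
      by (simp add: min_le_iff_disj le_max_iff_disj)
  qed
qed

lemma Phi_inv_ln_inverse_tail:
  "\<forall>\<^sub>F y in at_top. a < Phi_inv \<Phi> (ln (1 / F (- y))) \<and> \<Phi> (Phi_inv \<Phi> (ln (1 / F (- y)))) = ln (1 / F (- y))"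
  using order_tendstoD(2)[OF cdf_neg_tendsto_0 exp_gt_zero[of "- \<Phi> (a + 1)"]]
proof eventually_elim
  case (elim y)
  then have "ln (F (- y)) < - \<Phi> (a + 1)"
    using cdf_pos[of "- y"] by (metis exp_gt_zero ln_exp ln_less_cancel_iff)
  then have "\<Phi> (a + 1) \<le> ln (1 / F (- y))"
    using cdf_pos[of "- y"] by (simp add: ln_div)
  moreover have "0 < a + 1"
    using a_pos by simp
  ultimately show ?case
    using Phi_inv_above[of "a + 1" "ln (1 / F (- y))"] by simp
qed

lemma phi_over_rderiv_at_Phi_inv_tendsto:
  "((\<lambda>y. \<phi> y / rderiv \<Phi> (Phi_inv \<Phi> (ln (1 / F (- y))))) \<longlongrightarrow> 1) at_top"
proof (rule tendsto_sandwich)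
  let ?v = "\<lambda>y. Phi_inv \<Phi> (ln (1 / F (- y)))"
  let ?w = "\<lambda>y. (ln (1 / F (- y)) / \<Phi> y) powr (\<theta> - 1)"
  have "((\<lambda>y. ?w y) \<longlongrightarrow> 1 powr (\<theta> - 1)) at_top"
    by (intro tendsto_powr ln_inverse_tail_over_Phi_tendsto tendsto_const) simp
  then have "(?w \<longlongrightarrow> 1) at_top" by simp
  then show "((\<lambda>y. min 1 (?w y)) \<longlongrightarrow> 1) at_top" "((\<lambda>y. max 1 (?w y)) \<longlongrightarrow> 1) at_top"
    using tendsto_min[OF tendsto_const, of ?w 1 at_top 1] tendsto_max[OF tendsto_const, of ?w 1 at_top 1]
    by simp_all
  have "\<forall>\<^sub>F y in at_top. min 1 (?w y) \<le> \<phi> y / rderiv \<Phi> (?v y) \<and> \<phi> y / rderiv \<Phi> (?v y) \<le> max 1 (?w y)"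
    using Phi_inv_ln_inverse_tail eventually_gt_at_top[of a]
  proof eventually_elim
    case (elim y)
    then show ?case
      using phi_ratio_between[of y "?v y"] rderiv_eq_phi[of "?v y"] by simp
  qed
  then show "\<forall>\<^sub>F y in at_top. min 1 (?w y) \<le> \<phi> y / rderiv \<Phi> (?v y)"
    and "\<forall>\<^sub>F y in at_top. \<phi> y / rderiv \<Phi> (?v y) \<le> max 1 (?w y)"
    by (auto elim: eventually_mono)
qed

theorem J_of_asymptotics:
  "((\<lambda>t. J_of (mu_Phi \<Phi>) t / (t * rderiv \<Phi> (Phi_inv \<Phi> (ln (1 / t))))) \<longlongrightarrow> 1) (at_right 0)"
proof -
  let ?R = "\<lambda>t. J_of (mu_Phi \<Phi>) t / (t * rderiv \<Phi> (Phi_inv \<Phi> (ln (1 / t))))"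
  have "\<forall>\<^sub>F y in at_top. ?R (F (- y)) = J_of (mu_Phi \<Phi>) (F (- y)) / (F (- y) * \<phi> y)
      * (\<phi> y / rderiv \<Phi> (Phi_inv \<Phi> (ln (1 / F (- y)))))"
    using eventually_gt_at_top[of a]
  proof eventually_elim
    case (elim y)
    then have "\<phi> y \<noteq> 0" using phi_pos by force
    then show ?case by simp
  qed
  moreover have "((\<lambda>y. J_of (mu_Phi \<Phi>) (F (- y)) / (F (- y) * \<phi> y)
      * (\<phi> y / rderiv \<Phi> (Phi_inv \<Phi> (ln (1 / F (- y)))))) \<longlongrightarrow> 1 * 1) at_top"
    by (intro tendsto_mult J_over_tail_tendsto phi_over_rderiv_at_Phi_inv_tendsto)
  ultimately have "((\<lambda>y. ?R (F (- y))) \<longlongrightarrow> 1) at_top"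
    by (simp add: tendsto_cong)
  from filterlim_compose[OF this neg_quantile_tendsto_at_top]
  have lim: "((\<lambda>t. ?R (F (quantile t))) \<longlongrightarrow> 1) (at_right 0)"
    by simp
  have "\<forall>\<^sub>F t in at_right 0. ?R (F (quantile t)) = ?R t"
    unfolding eventually_at_right_field by (intro exI[of _ 1]) (auto simp: cdf_quantile)
  from tendsto_cong[OF this] lim show ?thesis
    by blast
qed

theorem J_of_comparable_L_Phi:
  assumes "\<Phi> 0 < ln 2" and right_cont: "continuous (at_right 0) \<Phi>"
  shows "\<exists>k1 k2. 0 < k1 \<and> 0 < k2 \<and> (\<forall>t\<in>{0..1}.
    k1 * L_Phi \<Phi> t \<le> J_of (mu_Phi \<Phi>) t \<and> J_of (mu_Phi \<Phi>) t \<le> k2 * L_Phi \<Phi> t)"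
proof -
  obtain \<eta> where \<eta>: "0 < \<eta>" "\<Phi> \<eta> \<le> ln 2"
    using right_continuous_exists_less[OF right_cont assms(1)] by (metis less_imp_le)
  have "\<exists>k1 k2. 0 < k1 \<and> 0 < k2 \<and> (\<forall>t\<in>{0<..1/2}.
      k1 * L_Phi \<Phi> t \<le> J_of (mu_Phi \<Phi>) t \<and> J_of (mu_Phi \<Phi>) t \<le> k2 * L_Phi \<Phi> t)"
  proof (rule bounded_ratio_from_limit)
    have "\<forall>\<^sub>F t in at_right 0. J_of (mu_Phi \<Phi>) t / (t * rderiv \<Phi> (Phi_inv \<Phi> (ln (1 / t))))
        = J_of (mu_Phi \<Phi>) t / L_Phi \<Phi> t"
      unfolding eventually_at_right_field by (intro exI[of _ "1 / 2"]) (simp add: L_Phi_eq)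
    from tendsto_cong[OF this] J_of_asymptotics
    show "((\<lambda>t. J_of (mu_Phi \<Phi>) t / L_Phi \<Phi> t) \<longlongrightarrow> 1) (at_right 0)"
      by blast
  qed (use L_Phi_pos[OF \<eta>] J_of_L_Phi_bounded_away_from_0[OF right_cont \<eta>] in auto)
  then show ?thesis
    using comparable_on_unit_interval[OF right_cont] by blast
qed

end

lemma (in concave_density_profile) regular_tail_profileI:
  assumes "C2_on {a0<..} \<Phi>" "1 < \<theta>" "convex_on {a0<..} (\<lambda>x. \<Phi> x powr \<theta>)"
  obtains a \<phi> where "regular_tail_profile \<Phi> a \<theta> \<phi>"
proof -
  obtain \<phi> where \<phi>: "\<And>x. a0 < x \<Longrightarrow> (\<Phi> has_real_derivative \<phi> x) (at x) \<and> (\<phi> differentiable at x)"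
    using assms(1) unfolding C2_on_def real_differentiable_def by blast
  obtain x0 where "0 \<le> x0" "0 < \<Phi> x0"
    using Phi_unbounded[of 0] by blast
  define a where "a = max (max a0 0) x0 + 1"
  have "regular_tail_profile \<Phi> a \<theta> \<phi>"
  proof unfold_locales
    show "0 < a" by (simp add: a_def)
    show "(\<Phi> has_real_derivative \<phi> x) (at x)" if "a < x" for x
      using \<phi> that by (simp add: a_def)
    show "continuous_on {a<..} \<phi>"
      using \<phi> by (intro continuous_at_imp_continuous_on) (auto simp: a_def intro: differentiable_imp_continuous_within)
    show "0 < \<Phi> x" if "a < x" for x
    proof -
      have "x0 \<le> x" using that by (simp add: a_def)
      then show ?thesis using Phi_mono[of x0 x] \<open>0 \<le> x0\<close> \<open>0 < \<Phi> x0\<close> by simp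
    qed
    show "convex_on {a<..} (\<lambda>x. \<Phi> x powr \<theta>)"
      by (rule convex_on_subset[OF assms(3)]) (auto simp: a_def)
  qed (rule assms(2))
  then show ?thesis by (rule that)
qed

theorem mainTheorem16:
  fixes \<Phi> :: "real \<Rightarrow> real"
  assumes mono: "mono_on {0..} \<Phi>"
    and concave: "concave_on {0..} \<Phi>"
    and sublin: "((\<lambda>x. \<Phi> x / x) \<longlongrightarrow> 0) at_top"
    and integr: "integrable lborel (\<lambda>x. exp (- \<Phi> \<bar>x\<bar>))"
    and nbhd: "\<exists>a. C2_on {a<..} \<Phi> \<and> (\<exists>\<theta>>1. convex_on {a<..} (\<lambda>x. \<Phi> x powr \<theta>))"
  shows "((\<lambda>t. J_of (mu_Phi \<Phi>) t / (t * rderiv \<Phi> (Phi_inv \<Phi> (ln (1 / t))))) \<longlongrightarrow> 1) (at_right 0)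
    \<and> ((\<Phi> 0 < ln 2 \<and> continuous (at_right 0) \<Phi>) \<longrightarrow>
         (\<forall>t\<in>{0<..<1}. ln (1 / min t (1 - t)) \<in> \<Phi> ` {0..}
            \<and> (\<exists>D. (\<Phi> has_real_derivative D) (at_right (Phi_inv \<Phi> (ln (1 / min t (1 - t)))))))
       \<and> (\<exists>k1 k2. k1 > 0 \<and> k2 > 0 \<and> (\<forall>t\<in>{0..1}.
            k1 * L_Phi \<Phi> t \<le> J_of (mu_Phi \<Phi>) t \<and> J_of (mu_Phi \<Phi>) t \<le> k2 * L_Phi \<Phi> t)))"
proof -
  interpret concave_density_profile \<Phi>
    by unfold_locales (fact mono concave integr)+
  obtain a0 \<theta> where "C2_on {a0<..} \<Phi>" "1 < \<theta>" "convex_on {a0<..} (\<lambda>x. \<Phi> x powr \<theta>)"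
    using nbhd by blast
  then obtain a \<phi> where "regular_tail_profile \<Phi> a \<theta> \<phi>"
    by (rule regular_tail_profileI)
  then interpret regular_tail_profile \<Phi> a \<theta> \<phi> .
  show ?thesis
  proof (intro conjI impI ballI)
    show "((\<lambda>t. J_of (mu_Phi \<Phi>) t / (t * rderiv \<Phi> (Phi_inv \<Phi> (ln (1 / t))))) \<longlongrightarrow> 1) (at_right 0)"
      by (rule J_of_asymptotics)
  next
    fix t :: real
    assume "\<Phi> 0 < ln 2 \<and> continuous (at_right 0) \<Phi>" and "t \<in> {0<..<1}"
    then obtain \<eta> where "0 < \<eta>" "\<Phi> \<eta> < ln 2"
      using right_continuous_exists_less by blast
    then show "ln (1 / min t (1 - t)) \<in> \<Phi> ` {0..}"
      and "\<exists>D. (\<Phi> has_real_derivative D) (at_right (Phi_inv \<Phi> (ln (1 / min t (1 - t)))))"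
      using L_Phi_well_defined[of \<eta> t] \<open>t \<in> {0<..<1}\<close> by auto
  qed (use J_of_comparable_L_Phi in auto)
qed

end
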